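(* Let $\ell\ge1$ and let $w$ be an $\ell$-perfect word over $\{0,1\}$ such that $|w|$ is a multiple of $\ell2^{2\ell}$. Then there exists a $2\ell$-perfect word $z$ over $\{0,1\}$ of length $2|w|$ such that $\mathrm{even}(z)=w$.
   Context: For a finite word $z=a_1\cdots a_m$, $\mathrm{even}(z)=a_2a_4\cdots$ (symbols at even positions). For words $w,u$, $|w|^{al}_u=|\{i: w[i..i+|u|-1]=u,\ i\equiv1\bmod|u|\}|$. A finite binary word $w$ is $\ell$-perfect if $|w|$ is a multiple of $\ell$ and every word $u$ of length $\ell$ satisfies $|w|^{al}_u=|w|/(\ell2^\ell)$. *)

theory Defs
  imports Complex_Main
begin

(* Binary words are lists of bool (False = 0, True = 1). Positions are 0-indexed
   internally; the paper's 1-indexed position i corresponds to index i-1. *)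

(* even(z) = a_2 a_4 ... : symbols at even 1-indexed positions = odd 0-indexed indices *)
definition even_part :: "bool list \<Rightarrow> bool list" where
  "even_part z = [z ! i. i \<leftarrow> [0..<length z], odd i]"

(* |w|^{al}_u : number of 1-indexed i with i = 1 mod |u| and w[i..i+|u|-1] = u;
   in 0-indexed form j = i-1 with j mod |u| = 0 *)
definition al_count :: "bool list \<Rightarrow> bool list \<Rightarrow> nat" where
  "al_count w u = card {j. j + length u \<le> length w \<and> j mod length u = 0
                          \<and> take (length u) (drop j w) = u}"

definition perfect :: "nat \<Rightarrow> bool list \<Rightarrow> bool" where
  "perfect l w \<longleftrightarrow> l dvd length w \<and>
     (\<forall>u. length u = l \<longrightarrow> real (al_count w u) = real (length w) / (real l * 2 ^ l))"

end

theory Submission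
  imports Defs
begin

text \<open>
  Cut \<open>w\<close> into its \<open>N = 2^(2\<ell>) m\<close> aligned blocks of length \<open>\<ell>\<close>; perfectness says that each
  of the \<open>2^\<ell>\<close> words of length \<open>\<ell>\<close> occurs as exactly \<open>2^\<ell> m\<close> of these blocks. Listing the
  positions of each such block in increasing order and cutting the list into \<open>2^\<ell>\<close> runs
  of length \<open>m\<close>, one labels every block by a word of length \<open>\<ell>\<close> so that every
  (block, label) pair occurs exactly \<open>m\<close> times. Interleaving each block with its label
  (label symbols at odd, block symbols at even positions) yields \<open>z\<close>: its even part
  is \<open>w\<close>, and its aligned blocks of length \<open>2\<ell>\<close> are the interleavings, in bijection
  with the (block, label) pairs, so each occurs \<open>m = |z|/(2\<ell> 2^(2\<ell>))\<close> times.
\<close>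

fun interleave :: "'a list \<Rightarrow> 'a list \<Rightarrow> 'a list" where
  "interleave (v # vs) (u # us) = v # u # interleave vs us"
| "interleave _ _ = []"

lemma length_interleave [simp]: "length (interleave v u) = 2 * min (length v) (length u)"
  by (induction v u rule: interleave.induct) auto

lemma interleave_eq_iff:
  assumes "length v = length u" "length v' = length u'"
  shows "interleave v u = interleave v' u' \<longleftrightarrow> v = v' \<and> u = u'"
  using assms
proof (induction v u arbitrary: v' u' rule: list_induct2)
  case Nil
  then show ?case by (cases v'; cases u') auto
next
  case (Cons x xs y ys)
  then show ?case by (cases v'; cases u') auto
qed

lemma ex_interleave:
  "even (length x) \<Longrightarrow> \<exists>v u. length v = length u \<and> x = interleave v u"
proof (induction x rule: induct_list012)
  case (3 a b xs)
  then obtain v u where "length v = length u" "xs = interleave v u" by auto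
  then show ?case by (intro exI[of _ "a # v"] exI[of _ "b # u"]) simp
qed (auto intro: exI[of _ "[]"])

lemma even_part_Nil [simp]: "even_part [] = []"
  and even_part_single [simp]: "even_part [a] = []"
  by (simp_all add: even_part_def)

lemma even_part_Cons2 [simp]: "even_part (a # b # xs) = b # even_part xs"
proof -
  have "[0..<length xs + 2] = 0 # 1 # [2..<length xs + 2]"
    by (simp del: upt_Suc add: upt_conv_Cons numeral_2_eq_2)
  also have "[2..<length xs + 2] = map (\<lambda>i. i + 2) [0..<length xs]"
    by (rule map_add_upt[symmetric])
  finally have "[0..<length xs + 2] = 0 # 1 # map (\<lambda>i. i + 2) [0..<length xs]" .
  then show ?thesis
    by (simp add: even_part_def comp_def del: upt_Suc cong: if_cong)
qed

lemma even_part_interleave: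
  "length v = length u \<Longrightarrow> even_part (interleave v u) = u"
  by (induction v u rule: list_induct2) auto

lemma even_part_append:
  "even (length xs) \<Longrightarrow> even_part (xs @ ys) = even_part xs @ even_part ys"
  by (induction xs rule: induct_list012) auto

lemma even_part_concat:
  "(\<And>x. x \<in> set xss \<Longrightarrow> even (length x)) \<Longrightarrow>
     even_part (concat xss) = concat (map even_part xss)"
  by (induction xss) (auto simp: even_part_append)

definition block :: "nat \<Rightarrow> 'a list \<Rightarrow> nat \<Rightarrow> 'a list" where
  "block L w k = take L (drop (k * L) w)"

lemma block_Suc: "block L w (Suc k) = block L (drop L w) k"
  by (simp add: block_def add.commute)

lemma length_block: "length w = n * L \<Longrightarrow> k < n \<Longrightarrow> length (block L w k) = L"
proof -
  assume "length w = n * L" "k < n"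
  then have "k * L + L \<le> length w"
    by (metis add.commute less_eq_Suc_le mult_Suc mult_le_mono1)
  then show ?thesis by (simp add: block_def)
qed

lemma block_concat:
  "(\<And>x. x \<in> set xss \<Longrightarrow> length x = L) \<Longrightarrow> k < length xss \<Longrightarrow>
     block L (concat xss) k = xss ! k"
proof (induction xss arbitrary: k)
  case (Cons x xss)
  then show ?case by (cases k) (auto simp: block_def add.commute)
qed simp

lemma concat_blocks: "length w = n * L \<Longrightarrow> concat (map (block L w) [0..<n]) = w"
proof (induction n arbitrary: w)
  case (Suc n)
  have "concat (map (block L (drop L w)) [0..<n]) = drop L w"
    using Suc by simp
  moreover have "block L w \<circ> Suc = block L (drop L w)"
    by (simp add: fun_eq_iff block_Suc)
  ultimately show ?case
    by (simp add: upt_conv_Cons flip: map_Suc_upt del: upt_Suc) (simp add: block_def)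
qed (simp add: block_def)

lemma al_count_eq_card_blocks:
  assumes "length u = L" "0 < L" "length w = n * L"
  shows "al_count w u = card {k. k < n \<and> block L w k = u}"
proof -
  have bound: "k * L + L \<le> n * L \<longleftrightarrow> k < n" for k
    using assms(2) by (metis Suc_le_eq add.commute mult_Suc mult_le_cancel2)
  have "{j. j + L \<le> length w \<and> j mod L = 0 \<and> take L (drop j w) = u}
        = (\<lambda>k. k * L) ` {k. k < n \<and> block L w k = u}"
  proof (intro set_eqI iffI)
    fix j assume "j \<in> {j. j + L \<le> length w \<and> j mod L = 0 \<and> take L (drop j w) = u}"
    moreover from this have "j mod L = 0"
      by simp
    then obtain k where "j = k * L"
      using div_mult_mod_eq[of j L] by (intro that[of "j div L"]) simp
    ultimately have "k < n" "block L w k = u"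
      using assms(3) bound[of k] unfolding block_def by simp_all
    with \<open>j = k * L\<close> show "j \<in> (\<lambda>k. k * L) ` {k. k < n \<and> block L w k = u}"
      by blast
  next
    fix j assume "j \<in> (\<lambda>k. k * L) ` {k. k < n \<and> block L w k = u}"
    then obtain k where "j = k * L" "k < n" "block L w k = u"
      by blast
    then show "j \<in> {j. j + L \<le> length w \<and> j mod L = 0 \<and> take L (drop j w) = u}"
      using assms(3) bound[of k] unfolding block_def by simp
  qed
  moreover have "inj (\<lambda>k. k * L)"
    using assms(2) by (simp add: inj_on_def)
  ultimately show ?thesis
    unfolding al_count_def assms(1) by (simp add: card_image inj_on_subset)
qed

lemma perfect_iff_block_count:
  assumes "0 < l" "length w = l * 2 ^ l * m"
  shows "perfect l w \<longleftrightarrow> (\<forall>u. length u = l \<longrightarrow> card {k. k < 2 ^ l * m \<and> block l w k = u} = m)"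
proof -
  have "real (length w) / (real l * 2 ^ l) = real m"
    using assms by simp
  moreover have "al_count w u = card {k. k < 2 ^ l * m \<and> block l w k = u}" if "length u = l" for u
    using al_count_eq_card_blocks[OF that assms(1), of w "2 ^ l * m"] assms(2) by (simp add: ac_simps)
  ultimately show ?thesis
    using assms(2) by (simp add: perfect_def)
qed

lemma bij_betw_rank:
  assumes "finite (S :: nat set)"
  shows "bij_betw (\<lambda>k. card {j \<in> S. j < k}) S {..<card S}"
proof -
  let ?r = "\<lambda>k. card {j \<in> S. j < k}"
  have "strict_mono_on S ?r"
    using assms by (intro strict_mono_onI psubset_card_mono) auto
  then have "inj_on ?r S"
    by (rule strict_mono_on_imp_inj_on)
  moreover have "?r ` S \<subseteq> {..<card S}"
    using assms by (auto intro!: psubset_card_mono)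
  ultimately show ?thesis
    by (simp add: bij_betw_def card_image card_subset_eq)
qed

lemma card_div_eq:
  fixes c q m :: nat
  assumes "c < q"
  shows "card {r \<in> {..<q * m}. r div m = c} = m"
proof (cases "m = 0")
  case False
  have "{r \<in> {..<q * m}. r div m = c} = {c * m..<c * m + m}"
  proof -
    have "c * m + m \<le> q * m"
      using assms by (metis Suc_le_eq add.commute mult_Suc mult_le_mono1)
    moreover have div_iff: "r div m = c \<longleftrightarrow> c * m \<le> r \<and> r < c * m + m" for r
    proof
      assume "r div m = c"
      then show "c * m \<le> r \<and> r < c * m + m"
        using False dividend_less_div_times[of m r] by auto
    next
      assume "c * m \<le> r \<and> r < c * m + m"
      then show "r div m = c"
        by (intro div_nat_eqI) (simp_all add: ac_simps)
    qed
    ultimately show ?thesis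
      by (intro set_eqI) (simp only: div_iff mem_Collect_eq lessThan_iff atLeastLessThan_iff, linarith)
  qed
  then show ?thesis
    by simp
qed simp

lemma card_filter_bij_betw:
  "bij_betw f A B \<Longrightarrow> card {x \<in> A. P (f x)} = card {y \<in> B. P y}"
  by (rule bij_betw_same_card, rule bij_betw_subset) (auto simp: bij_betw_def)

lemma ex_balanced_refinement:
  fixes f :: "nat \<Rightarrow> 'a" and B :: "'b set"
  assumes "finite B"
    and fibre_card: "\<And>a. a \<in> A \<Longrightarrow> card {k. k < N \<and> f k = a} = card B * m"
    and range_f: "\<And>k. k < N \<Longrightarrow> f k \<in> A"
  shows "\<exists>g. (\<forall>k<N. g k \<in> B) \<and> (\<forall>a\<in>A. \<forall>b\<in>B. card {k. k < N \<and> f k = a \<and> g k = b} = m)"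
proof -
  obtain h where h: "bij_betw h {..<card B} B"
    using ex_bij_betw_nat_finite[OF assms(1)] by (auto simp: atLeast0LessThan)
  define F where "F a = {k. k < N \<and> f k = a}" for a
  define rank where "rank k = card {j \<in> F (f k). j < k}" for k
  have rank_bij: "bij_betw rank (F a) {..<card B * m}" if "a \<in> A" for a
  proof -
    have "bij_betw (\<lambda>k. card {j \<in> F a. j < k}) (F a) {..<card B * m}"
      using bij_betw_rank[of "F a"] fibre_card[OF that] by (simp add: F_def)
    then show ?thesis
      by (rule bij_betw_cong[THEN iffD1, rotated]) (simp add: rank_def F_def)
  qed
  have rank_div: "rank k div m < card B" if "k < N" for k
    using bij_betw_apply[OF rank_bij[OF range_f[OF that]], of k] that
    by (simp add: F_def less_mult_imp_div_less)
  define g where "g k = h (rank k div m)" for k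
  have "card {k. k < N \<and> f k = a \<and> g k = b} = m" if "a \<in> A" "b \<in> B" for a b
  proof -
    obtain c where c: "c < card B" "b = h c"
      using \<open>b \<in> B\<close> h by (auto simp: bij_betw_def)
    have "{k. k < N \<and> f k = a \<and> g k = b} = {k \<in> F a. rank k div m = c}"
      using h c rank_div by (auto simp: F_def g_def bij_betw_def inj_on_def)
    also have "card \<dots> = card {r \<in> {..<card B * m}. r div m = c}"
      by (rule card_filter_bij_betw[OF rank_bij[OF \<open>a \<in> A\<close>]])
    also have "\<dots> = m"
      by (rule card_div_eq[OF \<open>c < card B\<close>])
    finally show ?thesis .
  qed
  moreover have "g k \<in> B" if "k < N" for k
    using bij_betw_apply[OF h] rank_div[OF that] by (simp add: g_def)
  ultimately show ?thesis
    by blast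
qed

definition interleave_blocks :: "nat \<Rightarrow> nat \<Rightarrow> (nat \<Rightarrow> 'a list) \<Rightarrow> 'a list \<Rightarrow> 'a list" where
  "interleave_blocks N l g w = concat (map (\<lambda>k. interleave (g k) (block l w k)) [0..<N])"

context
  fixes N l :: nat and g :: "nat \<Rightarrow> bool list" and w :: "bool list"
  assumes len_w: "length w = N * l"
    and len_g: "\<And>k. k < N \<Longrightarrow> length (g k) = l"
begin

lemma length_interleave_blocks: "length (interleave_blocks N l g w) = 2 * length w"
proof -
  have "map length (map (\<lambda>k. interleave (g k) (block l w k)) [0..<N]) = replicate N (2 * l)"
    using len_g length_block[OF len_w] by (intro nth_equalityI) simp_all
  then show ?thesis
    using len_w by (simp add: interleave_blocks_def length_concat sum_list_replicate del: map_map)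
qed

lemma block_interleave_blocks:
  "k < N \<Longrightarrow> block (2 * l) (interleave_blocks N l g w) k = interleave (g k) (block l w k)"
  using len_g length_block[OF len_w] by (subst interleave_blocks_def, subst block_concat) auto

lemma even_part_interleave_blocks: "even_part (interleave_blocks N l g w) = w"
proof -
  have "even_part (interleave_blocks N l g w)
        = concat (map (\<lambda>k. even_part (interleave (g k) (block l w k))) [0..<N])"
    unfolding interleave_blocks_def
    by (subst even_part_concat) (auto simp: comp_def len_g length_block[OF len_w])
  also have "\<dots> = concat (map (block l w) [0..<N])"
    by (intro arg_cong[where f = concat] map_cong)
       (simp_all add: even_part_interleave len_g length_block[OF len_w])
  also have "\<dots> = w"
    using concat_blocks[OF len_w] .
  finally show ?thesis .
qed

lemma perfect_interleave_blocks:
  assumes "0 < l" "N = 2 ^ (2 * l) * m"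
    and pair_count: "\<And>u v. length u = l \<Longrightarrow> length v = l \<Longrightarrow>
                      card {k. k < N \<and> block l w k = u \<and> g k = v} = m"
  shows "perfect (2 * l) (interleave_blocks N l g w)"
proof -
  have "card {k. k < N \<and> block (2 * l) (interleave_blocks N l g w) k = x} = m"
    if "length x = 2 * l" for x
  proof -
    obtain v u where vu: "length v = length u" "x = interleave v u"
      using ex_interleave[of x] \<open>length x = 2 * l\<close> by auto
    then have "length u = l" "length v = l"
      using \<open>length x = 2 * l\<close> by simp_all
    moreover have "block (2 * l) (interleave_blocks N l g w) k = x \<longleftrightarrow> block l w k = u \<and> g k = v"
      if "k < N" for k
      using block_interleave_blocks[OF that] interleave_eq_iff[of "g k" "block l w k" v u] vu
        len_g[OF that] length_block[OF len_w that] \<open>length u = l\<close> by auto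
    then have "{k. k < N \<and> block (2 * l) (interleave_blocks N l g w) k = x}
                 = {k. k < N \<and> block l w k = u \<and> g k = v}"
      by blast
    ultimately show ?thesis
      using pair_count by simp
  qed
  moreover have "length (interleave_blocks N l g w) = 2 * l * 2 ^ (2 * l) * m"
    unfolding length_interleave_blocks by (simp add: len_w assms(2))
  ultimately show ?thesis
    using assms(1,2) perfect_iff_block_count[of "2 * l"] by simp
qed

end

theorem lemma10:
  fixes l :: nat and w :: "bool list"
  assumes "l \<ge> 1"
    and "perfect l w"
    and "(l * 2 ^ (2 * l)) dvd length w"
  shows "\<exists>z :: bool list. length z = 2 * length w \<and> perfect (2 * l) z \<and> even_part z = w"
proof -
  obtain m where "length w = l * (2 ^ (2 * l) * m)"
    using assms(3) by (metis dvdE mult.assoc)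
  define N where "N = 2 ^ (2 * l) * m"
  have len_w: "length w = N * l" and N_eq: "N = 2 ^ l * (2 ^ l * m)"
    using \<open>length w = _\<close> by (simp_all add: N_def mult_2 power_add)
  let ?V = "{v :: bool list. length v = l}"
  have fin_V: "finite ?V" and card_V: "card ?V = 2 ^ l"
    using finite_lists_length_eq[of "UNIV :: bool set" l] card_lists_length_eq[of "UNIV :: bool set" l]
    by simp_all
  have fibre_card: "card {k. k < N \<and> block l w k = u} = card ?V * m" if "u \<in> ?V" for u
    using that assms(1,2) len_w N_eq card_V by (simp add: perfect_iff_block_count ac_simps)
  have block_V: "block l w k \<in> ?V" if "k < N" for k
    using length_block[OF len_w that] by simp
  obtain g :: "nat \<Rightarrow> bool list" where "\<forall>k<N. g k \<in> ?V"
      and "\<forall>u\<in>?V. \<forall>v\<in>?V. card {k. k < N \<and> block l w k = u \<and> g k = v} = m"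
    using ex_balanced_refinement[OF fin_V fibre_card block_V] by blast
  then have len_g: "\<And>k. k < N \<Longrightarrow> length (g k) = l"
    and pair_count: "\<And>u v. length u = l \<Longrightarrow> length v = l \<Longrightarrow>
                         card {k. k < N \<and> block l w k = u \<and> g k = v} = m"
    by simp_all
  have "0 < l"
    using assms(1) by simp
  then show ?thesis
    using length_interleave_blocks[where g = g, OF len_w len_g]
      even_part_interleave_blocks[where g = g, OF len_w len_g]
      perfect_interleave_blocks[where g = g, OF len_w len_g _ N_def pair_count] by blast
qed

end
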